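(* Let $\mathbf{L}$ be an intermediate propositional logic and $\mathbf{QL}$ a first-order extension of $\mathbf{L}$ preserved under shadow. If $A_1,\dots,A_n\vdash_{\varepsilon\tau^+(\mathbf{QL})}B$, then $A_1^s,\dots,A_n^s\vdash_{\mathbf{L}}B^s$. This also holds if identity axioms are present.
   Context: $\varepsilon\tau$-terms: $\varepsilon x\,A(x)$, $\tau x\,A(x)$ for any formula $A(x)$. Critical formulas: $A(t)\to A(\varepsilon x\,A(x))$ and $A(\tau x\,A(x))\to A(t)$. $\Gamma\vdash_{\varepsilon\tau^+(\mathbf{QL})}B$: $B$ derivable in $\mathbf{QL}$ (axioms, modus ponens, quantifier rules) in the first-order language with quantifiers and $\varepsilon\tau$-terms from $\Gamma$ and critical formulas. Shadow: $P(t_1,\dots,t_n)^s=X_P$ (a propositional variable depending only on $P$), $(t_1=t_2)^s=\top$ (a theorem of $\mathbf{L}$), $^s$ commutes with $\land,\lor,\to,\lnot$, $(\exists x\,A(x))^s=(\forall x\,A(x))^s=A(x)^s$. $\mathbf{QL}$ is preserved under shadow if $\vdash_{\mathbf{L}}A^s$ for every quantifier axiom $A$ of $\mathbf{QL}$, and for every rule $A_1,\dots,A_n\vdash_{\mathbf{QL}}B$ of $\mathbf{QL}$, $A_1^s,\dots,A_n^s\vdash_{\mathbf{L}}B^s$. *)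

theory Defs
  imports Main
begin

datatype pform = PVar nat | PBot | PAnd pform pform | POr pform pform | PImp pform pform

definition PNot :: "pform \<Rightarrow> pform" where "PNot A = PImp A PBot"
definition PTop :: pform where "PTop = PImp PBot PBot"

fun peval :: "(nat \<Rightarrow> bool) \<Rightarrow> pform \<Rightarrow> bool" where
  "peval v (PVar n) = v n"
| "peval v PBot = False"
| "peval v (PAnd A B) = (peval v A \<and> peval v B)"
| "peval v (POr A B) = (peval v A \<or> peval v B)"
| "peval v (PImp A B) = (peval v A \<longrightarrow> peval v B)"

definition tautology :: "pform \<Rightarrow> bool" where
  "tautology A = (\<forall>v. peval v A)"

fun psubst :: "(nat \<Rightarrow> pform) \<Rightarrow> pform \<Rightarrow> pform" where
  "psubst \<sigma> (PVar n) = \<sigma> n"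
| "psubst \<sigma> PBot = PBot"
| "psubst \<sigma> (PAnd A B) = PAnd (psubst \<sigma> A) (psubst \<sigma> B)"
| "psubst \<sigma> (POr A B) = POr (psubst \<sigma> A) (psubst \<sigma> B)"
| "psubst \<sigma> (PImp A B) = PImp (psubst \<sigma> A) (psubst \<sigma> B)"

inductive ipc :: "pform \<Rightarrow> bool" where
  ax1: "ipc (PImp A (PImp B A))"
| ax2: "ipc (PImp (PImp A (PImp B C)) (PImp (PImp A B) (PImp A C)))"
| ax3: "ipc (PImp (PAnd A B) A)"
| ax4: "ipc (PImp (PAnd A B) B)"
| ax5: "ipc (PImp A (PImp B (PAnd A B)))"
| ax6: "ipc (PImp A (POr A B))"
| ax7: "ipc (PImp B (POr A B))"
| ax8: "ipc (PImp (PImp A C) (PImp (PImp B C) (PImp (POr A B) C)))"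
| ax9: "ipc (PImp PBot A)"
| mp: "ipc A \<Longrightarrow> ipc (PImp A B) \<Longrightarrow> ipc B"

definition intermediate_logic :: "pform set \<Rightarrow> bool" where
  "intermediate_logic L \<longleftrightarrow>
     {A. ipc A} \<subseteq> L \<and> L \<subseteq> {A. tautology A} \<and>
     (\<forall>A B. A \<in> L \<longrightarrow> PImp A B \<in> L \<longrightarrow> B \<in> L) \<and>
     (\<forall>\<sigma> A. A \<in> L \<longrightarrow> psubst \<sigma> A \<in> L)"

inductive L_deriv :: "pform set \<Rightarrow> pform set \<Rightarrow> pform \<Rightarrow> bool" for L :: "pform set" where
  L_hyp: "A \<in> \<Gamma> \<Longrightarrow> L_deriv L \<Gamma> A"
| L_thm: "A \<in> L \<Longrightarrow> L_deriv L \<Gamma> A"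
| L_mp: "L_deriv L \<Gamma> A \<Longrightarrow> L_deriv L \<Gamma> (PImp A B) \<Longrightarrow> L_deriv L \<Gamma> B"

text \<open>Variables are de Bruijn indices. \<open>Eps A\<close>, \<open>Tau A\<close>, \<open>All A\<close>, \<open>Ex A\<close> bind index 0 in \<open>A\<close>.\<close>
datatype trm = Var nat | Fn nat "trm list" | Eps frm | Tau frm
     and frm = Pred nat "trm list" | Eq trm trm | FBot | FAnd frm frm | FOr frm frm
             | FImp frm frm | All frm | Ex frm

definition FNot :: "frm \<Rightarrow> frm" where "FNot A = FImp A FBot"

fun liftt :: "nat \<Rightarrow> trm \<Rightarrow> trm" and liftf :: "nat \<Rightarrow> frm \<Rightarrow> frm" where
  "liftt k (Var i) = Var (if i < k then i else Suc i)"
| "liftt k (Fn f ts) = Fn f (map (liftt k) ts)"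
| "liftt k (Eps A) = Eps (liftf (Suc k) A)"
| "liftt k (Tau A) = Tau (liftf (Suc k) A)"
| "liftf k (Pred P ts) = Pred P (map (liftt k) ts)"
| "liftf k (Eq s t) = Eq (liftt k s) (liftt k t)"
| "liftf k FBot = FBot"
| "liftf k (FAnd A B) = FAnd (liftf k A) (liftf k B)"
| "liftf k (FOr A B) = FOr (liftf k A) (liftf k B)"
| "liftf k (FImp A B) = FImp (liftf k A) (liftf k B)"
| "liftf k (All A) = All (liftf (Suc k) A)"
| "liftf k (Ex A) = Ex (liftf (Suc k) A)"

text \<open>Capture-avoiding substitution of \<open>u\<close> for index \<open>k\<close> (indices above \<open>k\<close> are lowered).\<close>
fun substt :: "nat \<Rightarrow> trm \<Rightarrow> trm \<Rightarrow> trm" and substf :: "nat \<Rightarrow> trm \<Rightarrow> frm \<Rightarrow> frm" where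
  "substt k u (Var i) = (if i < k then Var i else if i = k then u else Var (i - 1))"
| "substt k u (Fn f ts) = Fn f (map (substt k u) ts)"
| "substt k u (Eps A) = Eps (substf (Suc k) (liftt 0 u) A)"
| "substt k u (Tau A) = Tau (substf (Suc k) (liftt 0 u) A)"
| "substf k u (Pred P ts) = Pred P (map (substt k u) ts)"
| "substf k u (Eq s t) = Eq (substt k u s) (substt k u t)"
| "substf k u FBot = FBot"
| "substf k u (FAnd A B) = FAnd (substf k u A) (substf k u B)"
| "substf k u (FOr A B) = FOr (substf k u A) (substf k u B)"
| "substf k u (FImp A B) = FImp (substf k u A) (substf k u B)"
| "substf k u (All A) = All (substf (Suc k) (liftt 0 u) A)"
| "substf k u (Ex A) = Ex (substf (Suc k) (liftt 0 u) A)"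

text \<open>\<open>inst A t\<close> is \<open>A(t)\<close>, where \<open>A = A(x)\<close> with \<open>x\<close> the de Bruijn index 0.\<close>
definition inst :: "frm \<Rightarrow> trm \<Rightarrow> frm" where "inst A t = substf 0 t A"

fun fo_inst :: "(nat \<Rightarrow> frm) \<Rightarrow> pform \<Rightarrow> frm" where
  "fo_inst \<sigma> (PVar n) = \<sigma> n"
| "fo_inst \<sigma> PBot = FBot"
| "fo_inst \<sigma> (PAnd A B) = FAnd (fo_inst \<sigma> A) (fo_inst \<sigma> B)"
| "fo_inst \<sigma> (POr A B) = FOr (fo_inst \<sigma> A) (fo_inst \<sigma> B)"
| "fo_inst \<sigma> (PImp A B) = FImp (fo_inst \<sigma> A) (fo_inst \<sigma> B)"

fun shadow :: "frm \<Rightarrow> pform" where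
  "shadow (Pred P ts) = PVar P"
| "shadow (Eq s t) = PTop"
| "shadow FBot = PBot"
| "shadow (FAnd A B) = PAnd (shadow A) (shadow B)"
| "shadow (FOr A B) = POr (shadow A) (shadow B)"
| "shadow (FImp A B) = PImp (shadow A) (shadow B)"
| "shadow (All A) = shadow A"
| "shadow (Ex A) = shadow A"

text \<open>A first-order extension QL of L is given by L (all first-order substitution
  instances of theorems of L), a set \<open>QAx\<close> of quantifier axioms (all their instances
  in the \<open>\<epsilon>\<tau>\<close>-language), modus ponens, and a set \<open>QR\<close> of quantifier rules
  (pairs of a list of premises and a conclusion).  If \<open>ident\<close> holds, the identity
  axioms \<open>t = t\<close> and \<open>t = s \<rightarrow> (A(t) \<rightarrow> A(s))\<close> are present as well.\<close>

definition preserved_under_shadow :: "pform set \<Rightarrow> frm set \<Rightarrow> (frm list \<times> frm) set \<Rightarrow> bool" where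
  "preserved_under_shadow L QAx QR \<longleftrightarrow>
     (\<forall>A \<in> QAx. L_deriv L {} (shadow A)) \<and>
     (\<forall>(As, B) \<in> QR. L_deriv L (shadow ` set As) (shadow B))"

inductive et_deriv :: "pform set \<Rightarrow> frm set \<Rightarrow> (frm list \<times> frm) set \<Rightarrow> bool \<Rightarrow> frm set \<Rightarrow> frm \<Rightarrow> bool"
  for L QAx QR ident where
  hyp: "A \<in> \<Gamma> \<Longrightarrow> et_deriv L QAx QR ident \<Gamma> A"
| prop_ax: "A \<in> L \<Longrightarrow> et_deriv L QAx QR ident \<Gamma> (fo_inst \<sigma> A)"
| quant_ax: "A \<in> QAx \<Longrightarrow> et_deriv L QAx QR ident \<Gamma> A"
| crit_eps: "et_deriv L QAx QR ident \<Gamma> (FImp (inst A t) (inst A (Eps A)))"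
| crit_tau: "et_deriv L QAx QR ident \<Gamma> (FImp (inst A (Tau A)) (inst A t))"
| id_refl: "ident \<Longrightarrow> et_deriv L QAx QR ident \<Gamma> (Eq t t)"
| id_subst: "ident \<Longrightarrow> et_deriv L QAx QR ident \<Gamma> (FImp (Eq t s) (FImp (inst A t) (inst A s)))"
| mp: "et_deriv L QAx QR ident \<Gamma> A \<Longrightarrow> et_deriv L QAx QR ident \<Gamma> (FImp A B)
         \<Longrightarrow> et_deriv L QAx QR ident \<Gamma> B"
| rule: "(As, B) \<in> QR \<Longrightarrow> (\<forall>A \<in> set As. et_deriv L QAx QR ident \<Gamma> A)
         \<Longrightarrow> et_deriv L QAx QR ident \<Gamma> B"

end

theory Submission
  imports Defs
begin

(* The shadow forgets terms and quantifiers, so A(t) and A(\<epsilon>x A(x)) have the same shadow: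
   every critical formula, and every identity axiom, becomes an intuitionistic tautology
   of the form X \<rightarrow> X or \<top> \<rightarrow> (X \<rightarrow> X).  Propositional axioms become substitution instances
   of theorems of L, and quantifier axioms and rules are handled by preservation under
   shadow; an induction on derivations then carries the derivation over to L. *)

lemma shadow_substf [simp]: "shadow (substf k u A) = shadow A"
  by (induction A arbitrary: k u) auto

lemma shadow_inst [simp]: "shadow (inst A t) = shadow A"
  by (simp add: inst_def)

lemma shadow_fo_inst: "shadow (fo_inst \<sigma> A) = psubst (shadow \<circ> \<sigma>) A"
  by (induction A) auto

lemma ipc_imp_refl: "ipc (PImp A A)"
proof -
  have "ipc (PImp (PImp A (PImp A A)) (PImp A A))"
    using ipc.mp[OF ipc.ax1 ipc.ax2] .
  then show ?thesis
    by (rule ipc.mp[OF ipc.ax1])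
qed

lemma ipc_imp_imp_refl: "ipc (PImp B (PImp A A))"
  using ipc.mp[OF ipc_imp_refl ipc.ax1] .

lemma L_deriv_cut:
  assumes "L_deriv L \<Delta> C" and "\<And>D. D \<in> \<Delta> \<Longrightarrow> L_deriv L \<Gamma> D"
  shows "L_deriv L \<Gamma> C"
  using assms by (induction rule: L_deriv.induct) (auto intro: L_deriv.intros)

lemma L_deriv_weaken_empty: "L_deriv L {} C \<Longrightarrow> L_deriv L \<Gamma> C"
  using L_deriv_cut by blast

lemma intermediate_logicD:
  assumes "intermediate_logic L"
  shows intermediate_logic_ipc: "ipc A \<Longrightarrow> A \<in> L"
    and intermediate_logic_psubst: "A \<in> L \<Longrightarrow> psubst \<sigma> A \<in> L"
  using assms unfolding intermediate_logic_def by blast+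

lemma et_deriv_shadow:
  assumes ipc_L: "\<And>A. ipc A \<Longrightarrow> A \<in> L"
    and psubst_L: "\<And>\<sigma> A. A \<in> L \<Longrightarrow> psubst \<sigma> A \<in> L"
    and preserved: "preserved_under_shadow L QAx QR"
    and "et_deriv L QAx QR ident \<Gamma> B"
  shows "L_deriv L (shadow ` \<Gamma>) (shadow B)"
  using assms(4)
proof (induction rule: et_deriv.induct)
  case (hyp A \<Gamma>)
  then show ?case by (simp add: L_hyp)
next
  case (prop_ax A \<Gamma> \<sigma>)
  then show ?case by (simp add: shadow_fo_inst L_thm psubst_L)
next
  case (quant_ax A \<Gamma>)
  then show ?case
    using preserved L_deriv_weaken_empty unfolding preserved_under_shadow_def by blast
next
  case (crit_eps \<Gamma> A t)
  show ?case by (simp add: L_thm ipc_L ipc_imp_refl)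
next
  case (crit_tau \<Gamma> A t)
  show ?case by (simp add: L_thm ipc_L ipc_imp_refl)
next
  case (id_refl \<Gamma> t)
  show ?case by (simp add: PTop_def L_thm ipc_L ipc_imp_refl)
next
  case (id_subst \<Gamma> t s A)
  show ?case by (simp add: L_thm ipc_L ipc_imp_imp_refl)
next
  case (mp \<Gamma> A B)
  then show ?case by (auto intro: L_mp)
next
  case (rule As B \<Gamma>)
  have "L_deriv L (shadow ` set As) (shadow B)"
    using preserved rule.hyps unfolding preserved_under_shadow_def by blast
  then show ?case
    using rule.IH by (auto intro: L_deriv_cut)
qed

theorem mainTheorem15:
  fixes L :: "pform set" and QAx :: "frm set" and QR :: "(frm list \<times> frm) set"
    and ident :: bool and As :: "frm list" and B :: frm
  assumes "intermediate_logic L"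
    and "preserved_under_shadow L QAx QR"
    and "et_deriv L QAx QR ident (set As) B"
  shows "L_deriv L (shadow ` set As) (shadow B)"
  using et_deriv_shadow[OF intermediate_logic_ipc[OF assms(1)] intermediate_logic_psubst[OF assms(1)] assms(2,3)] .

end
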